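(* Let $\mathcal{A}=(A,B,s,t,\Delta)$ be a left multiplier bialgebroid with associated maps $\widetilde{T_\lambda},\widetilde{T_\rho}$. Regard $t$ as a homomorphism and $s$ as an anti-homomorphism from $B^{\mathrm{op}}$ to $M(A)$, let $\varsigma$ be the algebra isomorphism from the left target algebra $A\bar\times_BA$ of $\mathcal{A}$ onto the left target algebra $A\bar\times_{B^{\mathrm{op}}}A$ for $(A,B^{\mathrm{op}},t,s)$ induced by the flip $\Sigma\colon{}_BA\otimes A^B\to{}_{B^{\mathrm{op}}}A\otimes A^{B^{\mathrm{op}}}$, $a\otimes b\mapsto b\otimes a$ (i.e. $\varsigma(T)=\Sigma T\Sigma^{-1}$), and let $\Delta^{\mathrm{co}}=\varsigma\circ\Delta$. Then $\mathcal{A}^{\mathrm{co}}=(A,B^{\mathrm{op}},t,s,\Delta^{\mathrm{co}})$ is a left multiplier bialgebroid, and its associated maps are $\widetilde{T_\lambda}^{\mathrm{co}}=\Sigma\circ\widetilde{T_\rho}\circ\Sigma_{(A,A)}$ and $\widetilde{T_\rho}^{\mathrm{co}}=\Sigma\circ\widetilde{T_\lambda}\circ\Sigma_{(A,A)}$, where $\Sigma_{(A,A)}$ is the flip on $A\otimes A$.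
   Context: All algebras are associative complex algebras, not necessarily unital. For an algebra $A$ with $A_A$ non-degenerate (if $ab=0$ for all $b$ then $a=0$), $L(A)$ denotes the right $A$-module endomorphisms of $A$ (containing $A$ via left multiplication) and $M(A)=\{T\in L(A):aT\in A\ \forall a\}$. A left multiplier bialgebroid is a tuple $(A,B,s,t,\Delta)$ where: (i) $A,B$ are algebras, $A_A$ is non-degenerate and idempotent ($AA=A$); (ii) $s\colon B\to M(A)$ is a homomorphism and $t\colon B\to M(A)$ an anti-homomorphism with $s(x)t(y)=t(y)s(x)$, $s,t$ injective, $s(B)A=A=t(B)A$; ${}_BA\otimes A^B$, the quotient of $A\otimes A$ by the span of $s(x)a\otimes b-a\otimes t(x)b$, is non-degenerate as a right module over $A\otimes1$ and over $1\otimes A$; (iii) $\Delta$ is an algebra homomorphism into the algebra $A\bar\times_BA$ of linear endomorphisms $T$ of ${}_BA\otimes A^B$ such that for all $a,b\in A$ there are $T(a\otimes1),T(1\otimes b)\in{}_BA\otimes A^B$ with $T(a\otimes b)=T(a\otimes1)(1\otimes b)=T(1\otimes b)(a\otimes1)$; (iv) $\Delta(s(x)t(y)as(x')t(y'))=(t(y)\otimes s(x))\Delta(a)(t(y')\otimes s(x'))$ for $a\in A$, $x,y,x',y'\in B$; (v) for all $a,b,c\in A$: if $\Delta(b)(1\otimes c)=\sum_ip_i\otimes q_i$ and $\Delta(b)(a\otimes1)=\sum_ju_j\otimes v_j$, then $\sum_i\Delta(p_i)(a\otimes1)\otimes q_i=\sum_ju_j\otimes\Delta(v_j)(1\otimes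 c)$ in the quotient of $A^{\otimes3}$ by the span of $s(x)a\otimes b\otimes c-a\otimes t(x)b\otimes c$ and $a\otimes s(x)b\otimes c-a\otimes b\otimes t(x)c$. Its associated maps are $\widetilde{T_\lambda},\widetilde{T_\rho}\colon A\otimes A\to{}_BA\otimes A^B$, $\widetilde{T_\lambda}(a\otimes b)=\Delta(b)(a\otimes1)$, $\widetilde{T_\rho}(a\otimes b)=\Delta(a)(1\otimes b)$. *)

theory Defs
  imports Complex_Main
begin

class scaleC =
  fixes scaleC :: "complex \<Rightarrow> 'a \<Rightarrow> 'a"  (infixr \<open>*\<^sub>C\<close> 75)

class complex_vector = scaleC + ab_group_add +
  assumes scaleC_add_right: "a *\<^sub>C (x + y) = a *\<^sub>C x + a *\<^sub>C y"
    and scaleC_add_left: "(a + b) *\<^sub>C x = a *\<^sub>C x + b *\<^sub>C x"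
    and scaleC_scaleC: "a *\<^sub>C b *\<^sub>C x = (a * b) *\<^sub>C x"
    and scaleC_one: "1 *\<^sub>C x = x"

class complex_algebra = complex_vector + ring +
  assumes mult_scaleC_left: "a *\<^sub>C x * y = a *\<^sub>C (x * y)"
    and mult_scaleC_right: "x * a *\<^sub>C y = a *\<^sub>C (x * y)"

text \<open>An element of a (quotient of a) tensor power of A is represented by a finite
list of simple tensors; its image in the free complex vector space on the
underlying tuples is \<open>fv\<close>.\<close>

definition delta :: "'x \<Rightarrow> 'x \<Rightarrow> complex" where
  "delta p = (\<lambda>q. if q = p then 1 else 0)"

definition fv :: "'x list \<Rightarrow> 'x \<Rightarrow> complex" where
  "fv l = (\<lambda>q. of_nat (count_list l q))"

inductive_set cspan :: "('x \<Rightarrow> complex) set \<Rightarrow> ('x \<Rightarrow> complex) set" for G where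
  cspan_zero: "(\<lambda>_. 0) \<in> cspan G"
| cspan_step: "g \<in> G \<Longrightarrow> f \<in> cspan G \<Longrightarrow> (\<lambda>q. c * g q + f q) \<in> cspan G"

definition tens2 :: "('a::complex_vector \<times> 'a \<Rightarrow> complex) set" where
  "tens2 =
     {(\<lambda>q. delta (a + a', b) q - delta (a, b) q - delta (a', b) q) | a a' b. True}
   \<union> {(\<lambda>q. delta (a, b + b') q - delta (a, b) q - delta (a, b') q) | a b b'. True}
   \<union> {(\<lambda>q. delta (c *\<^sub>C a, b) q - c * delta (a, b) q) | c a b. True}
   \<union> {(\<lambda>q. delta (a, c *\<^sub>C b) q - c * delta (a, b) q) | c a b. True}"

definition bal2 :: "('b \<Rightarrow> 'a \<Rightarrow> 'a) \<Rightarrow> ('b \<Rightarrow> 'a \<Rightarrow> 'a) \<Rightarrow> ('a \<times> 'a \<Rightarrow> complex) set" where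
  "bal2 s t = {(\<lambda>q. delta (s x a, b) q - delta (a, t x b) q) | x a b. True}"

text \<open>Equality in the balanced tensor product  _B A \<otimes> A^B.\<close>
definition eqQ :: "('b \<Rightarrow> 'a::complex_vector \<Rightarrow> 'a) \<Rightarrow> ('b \<Rightarrow> 'a \<Rightarrow> 'a) \<Rightarrow>
    ('a \<times> 'a) list \<Rightarrow> ('a \<times> 'a) list \<Rightarrow> bool" where
  "eqQ s t l l' \<longleftrightarrow> (\<lambda>q. fv l q - fv l' q) \<in> cspan (tens2 \<union> bal2 s t)"

definition tens3 :: "('a::complex_vector \<times> 'a \<times> 'a \<Rightarrow> complex) set" where
  "tens3 =
     {(\<lambda>q. delta (a + a', b, d) q - delta (a, b, d) q - delta (a', b, d) q) | a a' b d. True}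
   \<union> {(\<lambda>q. delta (a, b + b', d) q - delta (a, b, d) q - delta (a, b', d) q) | a b b' d. True}
   \<union> {(\<lambda>q. delta (a, b, d + d') q - delta (a, b, d) q - delta (a, b, d') q) | a b d d'. True}
   \<union> {(\<lambda>q. delta (c *\<^sub>C a, b, d) q - c * delta (a, b, d) q) | c a b d. True}
   \<union> {(\<lambda>q. delta (a, c *\<^sub>C b, d) q - c * delta (a, b, d) q) | c a b d. True}
   \<union> {(\<lambda>q. delta (a, b, c *\<^sub>C d) q - c * delta (a, b, d) q) | c a b d. True}"

definition bal3 :: "('b \<Rightarrow> 'a \<Rightarrow> 'a) \<Rightarrow> ('b \<Rightarrow> 'a \<Rightarrow> 'a) \<Rightarrow> ('a \<times> 'a \<times> 'a \<Rightarrow> complex) set" where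
  "bal3 s t =
     {(\<lambda>q. delta (s x a, b, d) q - delta (a, t x b, d) q) | x a b d. True}
   \<union> {(\<lambda>q. delta (a, s x b, d) q - delta (a, b, t x d) q) | x a b d. True}"

definition eq3 :: "('b \<Rightarrow> 'a::complex_vector \<Rightarrow> 'a) \<Rightarrow> ('b \<Rightarrow> 'a \<Rightarrow> 'a) \<Rightarrow>
    ('a \<times> 'a \<times> 'a) list \<Rightarrow> ('a \<times> 'a \<times> 'a) list \<Rightarrow> bool" where
  "eq3 s t l l' \<longleftrightarrow> (\<lambda>q. fv l q - fv l' q) \<in> cspan (tens3 \<union> bal3 s t)"

text \<open>X(a \<otimes> 1), X(1 \<otimes> b), complex scalar multiple, and (f \<otimes> g)X.\<close>
definition rmul1 :: "('a::times \<times> 'a) list \<Rightarrow> 'a \<Rightarrow> ('a \<times> 'a) list" where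
  "rmul1 X a = map (\<lambda>(p, q). (p * a, q)) X"

definition rmul2 :: "('a::times \<times> 'a) list \<Rightarrow> 'a \<Rightarrow> ('a \<times> 'a) list" where
  "rmul2 X b = map (\<lambda>(p, q). (p, q * b)) X"

definition scal :: "complex \<Rightarrow> ('a::complex_vector \<times> 'a) list \<Rightarrow> ('a \<times> 'a) list" where
  "scal c X = map (\<lambda>(p, q). (c *\<^sub>C p, q)) X"

definition lmul2 :: "('a \<Rightarrow> 'a) \<Rightarrow> ('a \<Rightarrow> 'a) \<Rightarrow> ('a \<times> 'a) list \<Rightarrow> ('a \<times> 'a) list" where
  "lmul2 f g X = map (\<lambda>(p, q). (f p, g q)) X"

text \<open>A complex algebra structure (associative, bilinear) given by an explicit product;
used for B so that the opposite algebra B^op is \<open>\<lambda>x y. mB y x\<close>.\<close>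
definition cplx_alg :: "('b::complex_vector \<Rightarrow> 'b \<Rightarrow> 'b) \<Rightarrow> bool" where
  "cplx_alg m \<longleftrightarrow>
     (\<forall>x y z. m (m x y) z = m x (m y z)) \<and>
     (\<forall>x y z. m (x + y) z = m x z + m y z) \<and>
     (\<forall>x y z. m x (y + z) = m x y + m x z) \<and>
     (\<forall>c x y. m (c *\<^sub>C x) y = c *\<^sub>C m x y) \<and>
     (\<forall>c x y. m x (c *\<^sub>C y) = c *\<^sub>C m x y)"

definition clinear_map :: "('a::complex_vector \<Rightarrow> 'a) \<Rightarrow> bool" where
  "clinear_map T \<longleftrightarrow> (\<forall>a b. T (a + b) = T a + T b) \<and> (\<forall>c a. T (c *\<^sub>C a) = c *\<^sub>C T a)"

definition in_L :: "('a::complex_algebra \<Rightarrow> 'a) \<Rightarrow> bool" where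
  "in_L T \<longleftrightarrow> clinear_map T \<and> (\<forall>a b. T (a * b) = T a * b)"

text \<open>T \<in> M(A): aT \<in> A for all a.\<close>
definition in_M :: "('a::complex_algebra \<Rightarrow> 'a) \<Rightarrow> bool" where
  "in_M T \<longleftrightarrow> in_L T \<and> (\<forall>a. \<exists>c. \<forall>b. c * b = a * T b)"

text \<open>The element aT of A (for T \<in> M(A)).\<close>
definition rm :: "('a::complex_algebra \<Rightarrow> 'a) \<Rightarrow> 'a \<Rightarrow> 'a" where
  "rm T a = (THE c. \<forall>b. c * b = a * T b)"

definition cond_i :: "'a::complex_algebra itself \<Rightarrow> bool" where
  "cond_i _ \<longleftrightarrow>
     (\<forall>a::'a. (\<forall>b. a * b = 0) \<longrightarrow> a = 0) \<and>
     (\<forall>a::'a. \<exists>ps. a = sum_list (map (\<lambda>(x, y). x * y) ps))"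

definition cond_ii :: "('b::complex_vector \<Rightarrow> 'b \<Rightarrow> 'b) \<Rightarrow> ('b \<Rightarrow> 'a::complex_algebra \<Rightarrow> 'a) \<Rightarrow>
    ('b \<Rightarrow> 'a \<Rightarrow> 'a) \<Rightarrow> bool" where
  "cond_ii mB s t \<longleftrightarrow>
     (\<forall>x. in_M (s x)) \<and> (\<forall>x. in_M (t x)) \<and>
     (\<forall>x y. s (mB x y) = s x \<circ> s y) \<and>
     (\<forall>x y. s (x + y) = (\<lambda>a. s x a + s y a)) \<and>
     (\<forall>c x. s (c *\<^sub>C x) = (\<lambda>a. c *\<^sub>C s x a)) \<and>
     (\<forall>x y. t (mB x y) = t y \<circ> t x) \<and>
     (\<forall>x y. t (x + y) = (\<lambda>a. t x a + t y a)) \<and>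
     (\<forall>c x. t (c *\<^sub>C x) = (\<lambda>a. c *\<^sub>C t x a)) \<and>
     (\<forall>x y. s x \<circ> t y = t y \<circ> s x) \<and>
     inj s \<and> inj t \<and>
     (\<forall>a. \<exists>ps. a = sum_list (map (\<lambda>(x, b). s x b) ps)) \<and>
     (\<forall>a. \<exists>ps. a = sum_list (map (\<lambda>(x, b). t x b) ps)) \<and>
     (\<forall>X. (\<forall>a. eqQ s t (rmul1 X a) []) \<longrightarrow> eqQ s t X []) \<and>
     (\<forall>X. (\<forall>b. eqQ s t (rmul2 X b) []) \<longrightarrow> eqQ s t X [])"

text \<open>T \<in> A \<bar>\<times>_B A, T given on representatives (a linear endomorphism of
  _B A \<otimes> A^B).\<close>
definition in_barx :: "('b \<Rightarrow> 'a::complex_algebra \<Rightarrow> 'a) \<Rightarrow> ('b \<Rightarrow> 'a \<Rightarrow> 'a) \<Rightarrow>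
    (('a \<times> 'a) list \<Rightarrow> ('a \<times> 'a) list) \<Rightarrow> bool" where
  "in_barx s t T \<longleftrightarrow>
     (\<forall>l l'. eqQ s t l l' \<longrightarrow> eqQ s t (T l) (T l')) \<and>
     (\<forall>l l'. eqQ s t (T (l @ l')) (T l @ T l')) \<and>
     (\<forall>c l. eqQ s t (T (scal c l)) (scal c (T l))) \<and>
     (\<forall>a. \<exists>X. \<forall>b. eqQ s t (T [(a, b)]) (rmul2 X b)) \<and>
     (\<forall>b. \<exists>Y. \<forall>a. eqQ s t (T [(a, b)]) (rmul1 Y a))"

definition cond_iii :: "('b \<Rightarrow> 'a::complex_algebra \<Rightarrow> 'a) \<Rightarrow> ('b \<Rightarrow> 'a \<Rightarrow> 'a) \<Rightarrow>
    ('a \<Rightarrow> ('a \<times> 'a) list \<Rightarrow> ('a \<times> 'a) list) \<Rightarrow> bool" where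
  "cond_iii s t \<Delta> \<longleftrightarrow>
     (\<forall>a. in_barx s t (\<Delta> a)) \<and>
     (\<forall>a b l. eqQ s t (\<Delta> (a + b) l) (\<Delta> a l @ \<Delta> b l)) \<and>
     (\<forall>c a l. eqQ s t (\<Delta> (c *\<^sub>C a) l) (scal c (\<Delta> a l))) \<and>
     (\<forall>a b l. eqQ s t (\<Delta> (a * b) l) (\<Delta> a (\<Delta> b l)))"

definition cond_iv :: "('b \<Rightarrow> 'a::complex_algebra \<Rightarrow> 'a) \<Rightarrow> ('b \<Rightarrow> 'a \<Rightarrow> 'a) \<Rightarrow>
    ('a \<Rightarrow> ('a \<times> 'a) list \<Rightarrow> ('a \<times> 'a) list) \<Rightarrow> bool" where
  "cond_iv s t \<Delta> \<longleftrightarrow>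
     (\<forall>a x y x' y' l.
        eqQ s t (\<Delta> (s x (t y (rm (t y') (rm (s x') a)))) l)
                (lmul2 (t y) (s x) (\<Delta> a (lmul2 (t y') (s x') l))))"

text \<open>Representatives of \<Delta>(b)(a \<otimes> 1) and of \<Delta>(a)(1 \<otimes> b), i.e. of the associated
  maps  T\<lambda>~(a \<otimes> b) = \<Delta>(b)(a \<otimes> 1)  and  T\<rho>~(a \<otimes> b) = \<Delta>(a)(1 \<otimes> b).\<close>
definition Tlam :: "('b \<Rightarrow> 'a::complex_algebra \<Rightarrow> 'a) \<Rightarrow> ('b \<Rightarrow> 'a \<Rightarrow> 'a) \<Rightarrow>
    ('a \<Rightarrow> ('a \<times> 'a) list \<Rightarrow> ('a \<times> 'a) list) \<Rightarrow> 'a \<Rightarrow> 'a \<Rightarrow> ('a \<times> 'a) list set" where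
  "Tlam s t \<Delta> a b = {X. \<forall>c. eqQ s t (\<Delta> b [(a, c)]) (rmul2 X c)}"

definition Trho :: "('b \<Rightarrow> 'a::complex_algebra \<Rightarrow> 'a) \<Rightarrow> ('b \<Rightarrow> 'a \<Rightarrow> 'a) \<Rightarrow>
    ('a \<Rightarrow> ('a \<times> 'a) list \<Rightarrow> ('a \<times> 'a) list) \<Rightarrow> 'a \<Rightarrow> 'a \<Rightarrow> ('a \<times> 'a) list set" where
  "Trho s t \<Delta> a b = {Y. \<forall>c. eqQ s t (\<Delta> a [(c, b)]) (rmul1 Y c)}"

definition cond_v :: "('b \<Rightarrow> 'a::complex_algebra \<Rightarrow> 'a) \<Rightarrow> ('b \<Rightarrow> 'a \<Rightarrow> 'a) \<Rightarrow>
    ('a \<Rightarrow> ('a \<times> 'a) list \<Rightarrow> ('a \<times> 'a) list) \<Rightarrow> bool" where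
  "cond_v s t \<Delta> \<longleftrightarrow>
     (\<forall>a b c ps us R S.
        ps \<in> Trho s t \<Delta> b c \<and> us \<in> Tlam s t \<Delta> a b \<and>
        (\<forall>i < length ps. R i \<in> Tlam s t \<Delta> a (fst (ps ! i))) \<and>
        (\<forall>j < length us. S j \<in> Trho s t \<Delta> (snd (us ! j)) c) \<longrightarrow>
        eq3 s t
          (concat (map (\<lambda>i. map (\<lambda>(x, y). (x, y, snd (ps ! i))) (R i)) [0..<length ps]))
          (concat (map (\<lambda>j. map (\<lambda>(x, y). (fst (us ! j), x, y)) (S j)) [0..<length us])))"

definition left_mult_bialgebroid ::
    "('b::complex_vector \<Rightarrow> 'b \<Rightarrow> 'b) \<Rightarrow> ('b \<Rightarrow> 'a::complex_algebra \<Rightarrow> 'a) \<Rightarrow> ('b \<Rightarrow> 'a \<Rightarrow> 'a) \<Rightarrow>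
     ('a \<Rightarrow> ('a \<times> 'a) list \<Rightarrow> ('a \<times> 'a) list) \<Rightarrow> bool" where
  "left_mult_bialgebroid mB s t \<Delta> \<longleftrightarrow>
     cplx_alg mB \<and> cond_i TYPE('a) \<and> cond_ii mB s t \<and>
     cond_iii s t \<Delta> \<and> cond_iv s t \<Delta> \<and> cond_v s t \<Delta>"

definition flipQ :: "('a \<times> 'a) list \<Rightarrow> ('a \<times> 'a) list" where
  "flipQ = map prod.swap"

definition varsigma :: "(('a \<times> 'a) list \<Rightarrow> ('a \<times> 'a) list) \<Rightarrow> ('a \<times> 'a) list \<Rightarrow> ('a \<times> 'a) list" where
  "varsigma T = flipQ \<circ> T \<circ> flipQ"

definition Delta_co :: "('a \<Rightarrow> ('a \<times> 'a) list \<Rightarrow> ('a \<times> 'a) list) \<Rightarrow> 'a \<Rightarrow> ('a \<times> 'a) list \<Rightarrow> ('a \<times> 'a) list" where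
  "Delta_co \<Delta> = varsigma \<circ> \<Delta>"

end

theory Submission
  imports Defs
begin

text \<open>Everything transports along the flips \<open>a \<otimes> b \<mapsto> b \<otimes> a\<close> and
  \<open>a \<otimes> b \<otimes> c \<mapsto> c \<otimes> b \<otimes> a\<close>: they map the multilinearity relations to
  multilinearity relations and the balancing relations for \<open>(s, t)\<close> to (the negatives of)
  the balancing relations for \<open>(t, s)\<close>, so they induce isomorphisms of the balanced tensor
  products. Conjugating by the flip exchanges right multiplication in the two legs, hence
  \<open>T\<^sub>\<lambda>\<close> and \<open>T\<^sub>\<rho>\<close>, and turns each axiom for \<open>\<Delta>\<close> into the corresponding
  axiom for \<open>\<Delta>\<^sup>c\<^sup>o\<close>; coassociativity (v) is mirrored by the flip of
  three legs. The only non-formal point is axiom (iv), where the right actions of \<open>s(y')\<close>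
  and \<open>t(x')\<close> on \<open>A\<close> must commute; this follows from the commutation of
  \<open>s\<close> and \<open>t\<close> by non-degeneracy of \<open>A\<close>.\<close>

lemma cspan_lin: "g \<in> cspan G \<Longrightarrow> f \<in> cspan G \<Longrightarrow> (\<lambda>q. c * g q + f q) \<in> cspan G"
proof (induction g rule: cspan.induct)
  case cspan_zero
  then show ?case by simp
next
  case (cspan_step g0 f0 d)
  have "(\<lambda>q. c * f0 q + f q) \<in> cspan G" using cspan_step by blast
  from cspan.cspan_step[OF cspan_step(1) this, of "c * d"]
  show ?case by (simp add: algebra_simps)
qed

lemma cspan_base: "g \<in> G \<Longrightarrow> g \<in> cspan G"
  using cspan.cspan_step[of g G "\<lambda>_. 0" 1] by (simp add: cspan.cspan_zero)

lemma cspan_add: "g \<in> cspan G \<Longrightarrow> f \<in> cspan G \<Longrightarrow> (\<lambda>q. g q + f q) \<in> cspan G"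
  using cspan_lin[of g G f 1] by simp

lemma cspan_uminus: "g \<in> cspan G \<Longrightarrow> (\<lambda>q. - g q) \<in> cspan G"
  using cspan_lin[of g G "\<lambda>_. 0" "-1"] by (simp add: cspan.cspan_zero)

lemma cspan_comp:
  assumes "\<And>g. g \<in> G \<Longrightarrow> (\<lambda>q. g (f q)) \<in> cspan H"
  shows "h \<in> cspan G \<Longrightarrow> (\<lambda>q. h (f q)) \<in> cspan H"
proof (induction h rule: cspan.induct)
  case cspan_zero
  then show ?case by (simp add: cspan.cspan_zero)
next
  case (cspan_step g h c)
  then show ?case using cspan_lin[OF assms[OF cspan_step(1)] cspan_step(3)] by simp
qed

lemma fv_Cons: "fv (x # l) = (\<lambda>q. delta x q + fv l q)"
  by (auto simp: fv_def delta_def)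

lemma fv_map_involution:
  assumes "\<And>x. f (f x) = x"
  shows "fv (map f l) q = fv l (f q)"
proof -
  have "f a = q \<longleftrightarrow> a = f q" for a using assms by metis
  then have "count_list (map f l) q = count_list l (f q)" by (induction l) simp_all
  then show ?thesis by (simp add: fv_def)
qed

lemma delta_involution: "(\<And>x. f (f x) = x) \<Longrightarrow> delta p (f q) = delta (f p) q"
  unfolding delta_def by metis

lemma cspan_fv_map_involution:
  assumes inv: "\<And>x. f (f x) = x"
    and gen: "\<And>g. g \<in> G \<Longrightarrow> (\<lambda>q. g (f q)) \<in> cspan H"
    and "(\<lambda>q. fv l q - fv l' q) \<in> cspan G"
  shows "(\<lambda>q. fv (map f l) q - fv (map f l') q) \<in> cspan H"
  using cspan_comp[OF gen assms(3)] by (simp add: fv_map_involution[OF inv])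

lemma eqQ_refl: "eqQ s t l l"
  by (simp add: eqQ_def cspan.cspan_zero)

lemma eqQ_trans: "eqQ s t l l' \<Longrightarrow> eqQ s t l' l'' \<Longrightarrow> eqQ s t l l''"
  unfolding eqQ_def by (drule (1) cspan_add) simp

lemma tens2_swap: "g \<in> tens2 \<Longrightarrow> (\<lambda>q. g (prod.swap q)) \<in> tens2"
  unfolding tens2_def by (fastforce simp: delta_involution[of prod.swap])

lemma bal2_swap: "g \<in> bal2 s t \<Longrightarrow> (\<lambda>q. - g (prod.swap q)) \<in> bal2 t s"
  unfolding bal2_def by (fastforce simp: delta_involution[of prod.swap])

lemma flipQ_flipQ [simp]: "flipQ (flipQ l) = l"
  by (simp add: flipQ_def comp_def)

lemma eqQ_flipQ: "eqQ s t l l' \<Longrightarrow> eqQ t s (flipQ l) (flipQ l')"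
proof -
  have "(\<lambda>q. g (prod.swap q)) \<in> cspan (tens2 \<union> bal2 t s)" if "g \<in> tens2 \<union> bal2 s t" for g
    using that
  proof
    assume "g \<in> tens2"
    then show ?thesis by (intro cspan_base UnI1 tens2_swap)
  next
    assume "g \<in> bal2 s t"
    then have "(\<lambda>q. - g (prod.swap q)) \<in> cspan (tens2 \<union> bal2 t s)"
      by (intro cspan_base UnI2 bal2_swap)
    then show ?thesis using cspan_uminus by fastforce
  qed
  then show "eqQ s t l l' \<Longrightarrow> eqQ t s (flipQ l) (flipQ l')"
    unfolding eqQ_def flipQ_def by (rule cspan_fv_map_involution[OF swap_swap])
qed

lemma eqQ_flipQ_iff: "eqQ t s l l' \<longleftrightarrow> eqQ s t (flipQ l) (flipQ l')"
  using eqQ_flipQ[of s t "flipQ l" "flipQ l'"] eqQ_flipQ[of t s l l'] by auto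

lemma flipQ_append [simp]: "flipQ (l @ l') = flipQ l @ flipQ l'"
  by (simp add: flipQ_def)

lemma flipQ_Nil [simp]: "flipQ [] = []"
  by (simp add: flipQ_def)

lemma flipQ_single [simp]: "flipQ [(a, b)] = [(b, a)]"
  by (simp add: flipQ_def)

lemma length_flipQ [simp]: "length (flipQ l) = length l"
  by (simp add: flipQ_def)

lemma nth_flipQ: "i < length l \<Longrightarrow> flipQ l ! i = prod.swap (l ! i)"
  by (simp add: flipQ_def)

lemma flipQ_image: "x \<in> flipQ ` S \<longleftrightarrow> flipQ x \<in> S"
  by (metis flipQ_flipQ image_iff)

lemma flipQ_rmul1: "flipQ (rmul1 Y a) = rmul2 (flipQ Y) a"
  by (simp add: flipQ_def rmul1_def rmul2_def split_def)

lemma flipQ_rmul2: "flipQ (rmul2 Y a) = rmul1 (flipQ Y) a"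
  by (simp add: flipQ_def rmul1_def rmul2_def split_def)

lemma flipQ_lmul2: "flipQ (lmul2 f g l) = lmul2 g f (flipQ l)"
  by (simp add: flipQ_def lmul2_def split_def)

lemma eqQ_scal_flipQ: "eqQ s t (flipQ (scal c (flipQ Y))) (scal c Y)"
proof (induction Y)
  case Nil
  then show ?case by (simp add: scal_def eqQ_refl)
next
  case (Cons y Y)
  obtain a b where y: "y = (a, b)" by (cases y)
  have right: "(\<lambda>q. delta (a, c *\<^sub>C b) q - c * delta (a, b) q) \<in> cspan (tens2 \<union> bal2 s t)"
    by (rule cspan_base, rule UnI1, unfold tens2_def) blast
  have left: "(\<lambda>q. delta (c *\<^sub>C a, b) q - c * delta (a, b) q) \<in> cspan (tens2 \<union> bal2 s t)"
    by (rule cspan_base, rule UnI1, unfold tens2_def) blast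
  from cspan_add[OF right cspan_add[OF cspan_uminus[OF left] Cons[unfolded eqQ_def]]]
  show ?case by (simp add: eqQ_def y scal_def flipQ_def fv_Cons algebra_simps)
qed

lemma Delta_co_apply: "Delta_co \<Delta> a l = flipQ (\<Delta> a (flipQ l))"
  by (simp add: Delta_co_def varsigma_def)

lemma Tlam_Delta_co: "Tlam t s (Delta_co \<Delta>) a b = flipQ ` Trho s t \<Delta> b a"
  by (auto simp: flipQ_image Tlam_def Trho_def Delta_co_apply eqQ_flipQ_iff[of t s] flipQ_rmul2)

lemma Trho_Delta_co: "Trho t s (Delta_co \<Delta>) a b = flipQ ` Tlam s t \<Delta> b a"
  by (auto simp: flipQ_image Tlam_def Trho_def Delta_co_apply eqQ_flipQ_iff[of t s] flipQ_rmul1)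

definition rev3 :: "'a \<times> 'a \<times> 'a \<Rightarrow> 'a \<times> 'a \<times> 'a" where
  "rev3 = (\<lambda>(p, q, r). (r, q, p))"

lemma rev3_rev3: "rev3 (rev3 x) = x"
  by (cases x) (simp add: rev3_def)

lemma rev3_simp [simp]: "rev3 (a, b, c) = (c, b, a)"
  by (simp add: rev3_def)

lemma tens3_rev3: "g \<in> tens3 \<Longrightarrow> (\<lambda>q. g (rev3 q)) \<in> tens3"
  unfolding tens3_def by (fastforce simp: delta_involution[of rev3, OF rev3_rev3])

lemma bal3_rev3: "g \<in> bal3 s t \<Longrightarrow> (\<lambda>q. - g (rev3 q)) \<in> bal3 t s"
  unfolding bal3_def by (fastforce simp: delta_involution[of rev3, OF rev3_rev3])

lemma eq3_sym: "eq3 s t l l' \<Longrightarrow> eq3 s t l' l"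
  unfolding eq3_def by (drule cspan_uminus) simp

lemma eq3_rev3: "eq3 s t l l' \<Longrightarrow> eq3 t s (map rev3 l) (map rev3 l')"
proof -
  have "(\<lambda>q. g (rev3 q)) \<in> cspan (tens3 \<union> bal3 t s)" if "g \<in> tens3 \<union> bal3 s t" for g
    using that
  proof
    assume "g \<in> tens3"
    then show ?thesis by (intro cspan_base UnI1 tens3_rev3)
  next
    assume "g \<in> bal3 s t"
    then have "(\<lambda>q. - g (rev3 q)) \<in> cspan (tens3 \<union> bal3 t s)"
      by (intro cspan_base UnI2 bal3_rev3)
    then show ?thesis using cspan_uminus by fastforce
  qed
  then show "eq3 s t l l' \<Longrightarrow> eq3 t s (map rev3 l) (map rev3 l')"
    unfolding eq3_def by (rule cspan_fv_map_involution[OF rev3_rev3])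
qed

lemma map_rev3_concat_right:
  "map rev3 (concat (map (\<lambda>i. map (\<lambda>(x, y). (x, y, snd (flipQ us ! i))) (flipQ (S i)))
      [0..<length (flipQ us)]))
   = concat (map (\<lambda>i. map (\<lambda>(x, y). (fst (us ! i), x, y)) (S i)) [0..<length us])"
  by (auto simp: map_concat nth_flipQ flipQ_def split_def intro!: arg_cong[where f = concat] map_cong)

lemma map_rev3_concat_left:
  "map rev3 (concat (map (\<lambda>i. map (\<lambda>(x, y). (fst (flipQ ps ! i), x, y)) (flipQ (R i)))
      [0..<length (flipQ ps)]))
   = concat (map (\<lambda>i. map (\<lambda>(x, y). (x, y, snd (ps ! i))) (R i)) [0..<length ps])"
  by (auto simp: map_concat nth_flipQ flipQ_def split_def intro!: arg_cong[where f = concat] map_cong)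

lemma nondegenerate_right_cancel:
  fixes c d :: "'a::ring"
  assumes nd: "\<forall>a::'a. (\<forall>b. a * b = 0) \<longrightarrow> a = 0"
    and eq: "\<And>b. c * b = d * b"
  shows "c = d"
proof -
  have "\<forall>b. (c - d) * b = 0" using eq by (simp add: left_diff_distrib)
  with nd have "c - d = 0" by blast
  then show ?thesis by simp
qed

lemma rm_mult:
  fixes T :: "'a::complex_algebra \<Rightarrow> 'a"
  assumes nd: "\<forall>a::'a. (\<forall>b. a * b = 0) \<longrightarrow> a = 0"
    and M: "in_M T"
  shows "rm T a * b = a * T b"
proof -
  from M obtain c where c: "\<forall>b. c * b = a * T b" unfolding in_M_def by blast
  have "rm T a = c" unfolding rm_def
  proof (rule the_equality)
    show "\<forall>b. c * b = a * T b" by (rule c)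
  next
    fix c' assume c': "\<forall>b. c' * b = a * T b"
    show "c' = c" by (rule nondegenerate_right_cancel[OF nd]) (simp add: c c')
  qed
  with c show ?thesis by simp
qed

lemma rm_rm_commute:
  fixes S T :: "'a::complex_algebra \<Rightarrow> 'a"
  assumes nd: "\<forall>a::'a. (\<forall>b. a * b = 0) \<longrightarrow> a = 0"
    and S: "in_M S" and T: "in_M T" and comm: "S \<circ> T = T \<circ> S"
  shows "rm S (rm T a) = rm T (rm S a)"
proof (rule nondegenerate_right_cancel[OF nd])
  fix b
  have "rm S (rm T a) * b = a * T (S b)" by (simp add: rm_mult[OF nd S] rm_mult[OF nd T])
  also have "T (S b) = S (T b)" using fun_cong[OF comm, of b] by simp
  also have "a * S (T b) = rm T (rm S a) * b" by (simp add: rm_mult[OF nd S] rm_mult[OF nd T])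
  finally show "rm S (rm T a) * b = rm T (rm S a) * b" .
qed

lemma cplx_alg_opposite: "cplx_alg mB \<Longrightarrow> cplx_alg (\<lambda>x y. mB y x)"
  unfolding cplx_alg_def by metis

lemma cond_ii_co:
  assumes "cond_ii mB s t"
  shows "cond_ii (\<lambda>x y. mB y x) t s"
proof -
  from assms have nd1: "\<And>X. (\<forall>a. eqQ s t (rmul1 X a) []) \<Longrightarrow> eqQ s t X []"
    and nd2: "\<And>X. (\<forall>b. eqQ s t (rmul2 X b) []) \<Longrightarrow> eqQ s t X []"
    unfolding cond_ii_def by blast+
  have "eqQ t s X []" if "\<forall>a. eqQ t s (rmul1 X a) []" for X
    using that nd2[of "flipQ X"] by (simp add: eqQ_flipQ_iff[of t s] flipQ_rmul1)
  moreover have "eqQ t s X []" if "\<forall>a. eqQ t s (rmul2 X a) []" for X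
    using that nd1[of "flipQ X"] by (simp add: eqQ_flipQ_iff[of t s] flipQ_rmul2)
  ultimately show ?thesis using assms unfolding cond_ii_def by metis
qed

lemma in_barx_co:
  assumes T: "in_barx s t T"
  shows "in_barx t s (flipQ \<circ> T \<circ> flipQ)"
proof -
  from T have T_cong: "\<And>l l'. eqQ s t l l' \<Longrightarrow> eqQ s t (T l) (T l')"
    and T_append: "\<And>l l'. eqQ s t (T (l @ l')) (T l @ T l')"
    and T_scal: "\<And>c l. eqQ s t (T (scal c l)) (scal c (T l))"
    and T_left: "\<And>a. \<exists>X. \<forall>b. eqQ s t (T [(a, b)]) (rmul2 X b)"
    and T_right: "\<And>b. \<exists>Y. \<forall>a. eqQ s t (T [(a, b)]) (rmul1 Y a)"
    unfolding in_barx_def by blast+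
  have "eqQ t s (flipQ (T (flipQ (scal c l)))) (scal c (flipQ (T (flipQ l))))" for c l
  proof -
    have "eqQ s t (T (flipQ (scal c l))) (scal c (T (flipQ l)))"
      using T_cong[OF eqQ_scal_flipQ[of s t c "flipQ l", simplified]] T_scal eqQ_trans by blast
    then have "eqQ t s (flipQ (T (flipQ (scal c l)))) (flipQ (scal c (T (flipQ l))))"
      by (rule eqQ_flipQ)
    with eqQ_scal_flipQ[of t s c "flipQ (T (flipQ l))"] show ?thesis
      by (simp add: eqQ_trans)
  qed
  moreover have "\<exists>X. \<forall>b. eqQ t s (flipQ (T [(b, a)])) (rmul2 X b)" for a
  proof -
    obtain Y where "\<forall>b. eqQ s t (T [(b, a)]) (rmul1 Y b)" using T_right by blast
    then show ?thesis by (intro exI[of _ "flipQ Y"]) (simp add: eqQ_flipQ_iff[of t s] flipQ_rmul2)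
  qed
  moreover have "\<exists>Y. \<forall>a. eqQ t s (flipQ (T [(b, a)])) (rmul1 Y a)" for b
  proof -
    obtain X where "\<forall>a. eqQ s t (T [(b, a)]) (rmul2 X a)" using T_left by blast
    then show ?thesis by (intro exI[of _ "flipQ X"]) (simp add: eqQ_flipQ_iff[of t s] flipQ_rmul1)
  qed
  ultimately show ?thesis
    unfolding in_barx_def using T_cong T_append by (simp add: eqQ_flipQ_iff[of t s])
qed

lemma cond_iii_co:
  assumes "cond_iii s t \<Delta>"
  shows "cond_iii t s (Delta_co \<Delta>)"
proof -
  from assms have barx: "\<And>a. in_barx s t (\<Delta> a)"
    and add: "\<And>a b l. eqQ s t (\<Delta> (a + b) l) (\<Delta> a l @ \<Delta> b l)"
    and scal: "\<And>c a l. eqQ s t (\<Delta> (c *\<^sub>C a) l) (scal c (\<Delta> a l))"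
    and mult: "\<And>a b l. eqQ s t (\<Delta> (a * b) l) (\<Delta> a (\<Delta> b l))"
    unfolding cond_iii_def by blast+
  have "in_barx t s (Delta_co \<Delta> a)" for a
    using in_barx_co[OF barx[of a]] by (simp add: Delta_co_def varsigma_def)
  moreover have "eqQ t s (Delta_co \<Delta> (c *\<^sub>C a) l) (scal c (Delta_co \<Delta> a l))" for c a l
  proof -
    have "eqQ t s (flipQ (\<Delta> (c *\<^sub>C a) (flipQ l))) (flipQ (scal c (\<Delta> a (flipQ l))))"
      using scal by (simp add: eqQ_flipQ_iff[of t s])
    with eqQ_scal_flipQ[of t s c "flipQ (\<Delta> a (flipQ l))"] show ?thesis
      by (simp add: Delta_co_apply eqQ_trans)
  qed
  moreover note add mult
  ultimately show ?thesis
    unfolding cond_iii_def by (simp add: Delta_co_apply eqQ_flipQ_iff[of t s])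
qed

lemma cond_iv_co:
  fixes s t :: "'b::complex_vector \<Rightarrow> 'a::complex_algebra \<Rightarrow> 'a"
  assumes nd: "\<forall>a::'a. (\<forall>b. a * b = 0) \<longrightarrow> a = 0"
    and ii: "cond_ii mB s t" and iv: "cond_iv s t \<Delta>"
  shows "cond_iv t s (Delta_co \<Delta>)"
  unfolding cond_iv_def
proof (intro allI)
  fix a x y x' y' l
  from ii have M_s: "\<And>x. in_M (s x)" and M_t: "\<And>x. in_M (t x)"
    and comm: "\<And>x y. s x \<circ> t y = t y \<circ> s x"
    unfolding cond_ii_def by blast+
  have st: "t x (s y b) = s y (t x b)" for b using fun_cong[OF comm[of y x], of b] by simp
  have rm_st: "rm (s y') (rm (t x') a) = rm (t x') (rm (s y') a)"
    by (rule rm_rm_commute[OF nd M_s M_t comm])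
  have "eqQ s t (\<Delta> (s y (t x (rm (t x') (rm (s y') a)))) (flipQ l))
      (lmul2 (t x) (s y) (\<Delta> a (lmul2 (t x') (s y') (flipQ l))))"
    using iv[unfolded cond_iv_def, rule_format, where a = a and x = y and y = x and x' = y'
        and y' = x' and l = "flipQ l"] .
  then show "eqQ t s (Delta_co \<Delta> (t x (s y (rm (s y') (rm (t x') a)))) l)
      (lmul2 (s y) (t x) (Delta_co \<Delta> a (lmul2 (s y') (t x') l)))"
    by (simp add: eqQ_flipQ_iff[of t s] Delta_co_apply st rm_st flipQ_lmul2)
qed

lemma cond_v_co:
  assumes v: "cond_v s t \<Delta>"
  shows "cond_v t s (Delta_co \<Delta>)"
  unfolding cond_v_def
proof (intro allI impI, elim conjE)
  fix a b c ps us R S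
  assume "ps \<in> Trho t s (Delta_co \<Delta>) b c" and "us \<in> Tlam t s (Delta_co \<Delta>) a b"
    and "\<forall>i<length ps. R i \<in> Tlam t s (Delta_co \<Delta>) a (fst (ps ! i))"
    and "\<forall>j<length us. S j \<in> Trho t s (Delta_co \<Delta>) (snd (us ! j)) c"
  then have "flipQ us \<in> Trho s t \<Delta> b a" and "flipQ ps \<in> Tlam s t \<Delta> c b"
    and "\<forall>j<length (flipQ us). flipQ (S j) \<in> Tlam s t \<Delta> c (fst (flipQ us ! j))"
    and "\<forall>i<length (flipQ ps). flipQ (R i) \<in> Trho s t \<Delta> (snd (flipQ ps ! i)) a"
    by (simp_all add: Tlam_Delta_co Trho_Delta_co flipQ_image nth_flipQ)
  then have "eq3 s t
      (concat (map (\<lambda>i. map (\<lambda>(x, y). (x, y, snd (flipQ us ! i))) (flipQ (S i)))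
        [0..<length (flipQ us)]))
      (concat (map (\<lambda>j. map (\<lambda>(x, y). (fst (flipQ ps ! j), x, y)) (flipQ (R j)))
        [0..<length (flipQ ps)]))"
    using v[unfolded cond_v_def, rule_format, where a = c and c = a and ps = "flipQ us"
        and us = "flipQ ps" and R = "\<lambda>i. flipQ (S i)" and S = "\<lambda>j. flipQ (R j)"]
    by blast
  from eq3_sym[OF eq3_rev3[OF this]]
  show "eq3 t s (concat (map (\<lambda>i. map (\<lambda>(x, y). (x, y, snd (ps ! i))) (R i)) [0..<length ps]))
      (concat (map (\<lambda>j. map (\<lambda>(x, y). (fst (us ! j), x, y)) (S j)) [0..<length us]))"
    by (simp only: map_rev3_concat_left map_rev3_concat_right)
qed

theorem proposition2p7:
  fixes mB :: "'b::complex_vector \<Rightarrow> 'b \<Rightarrow> 'b"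
    and s t :: "'b \<Rightarrow> 'a::complex_algebra \<Rightarrow> 'a"
    and \<Delta> :: "'a \<Rightarrow> ('a \<times> 'a) list \<Rightarrow> ('a \<times> 'a) list"
  assumes "left_mult_bialgebroid mB s t \<Delta>"
  shows "left_mult_bialgebroid (\<lambda>x y. mB y x) t s (Delta_co \<Delta>)
    \<and> (\<forall>a b. Tlam t s (Delta_co \<Delta>) a b = flipQ ` Trho s t \<Delta> b a)
    \<and> (\<forall>a b. Trho t s (Delta_co \<Delta>) a b = flipQ ` Tlam s t \<Delta> b a)"
proof -
  from assms have alg: "cplx_alg mB" and i: "cond_i TYPE('a)" and ii: "cond_ii mB s t"
    and iii: "cond_iii s t \<Delta>" and iv: "cond_iv s t \<Delta>" and v: "cond_v s t \<Delta>"
    unfolding left_mult_bialgebroid_def by blast+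
  from i have nd: "\<forall>a::'a. (\<forall>b. a * b = 0) \<longrightarrow> a = 0"
    unfolding cond_i_def by blast
  have "left_mult_bialgebroid (\<lambda>x y. mB y x) t s (Delta_co \<Delta>)"
    unfolding left_mult_bialgebroid_def
    using cplx_alg_opposite[OF alg] i cond_ii_co[OF ii] cond_iii_co[OF iii]
      cond_iv_co[OF nd ii iv] cond_v_co[OF v]
    by blast
  then show ?thesis by (simp add: Tlam_Delta_co Trho_Delta_co)
qed

end
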